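(* Let $\mathcal A_1,\mathcal A_2,\dots,\mathcal A_d\subset 2^{[n]}$ be pairwise cross-IU, i.e. for all $i\neq j$ and all $A\in\mathcal A_i$, $B\in\mathcal A_j$ we have $A\cap B\neq\emptyset$ and $A\cup B\neq[n]$. Then $$\sum_{i=1}^d|\mathcal A_i|\le\max\{2^n,\ d\cdot 2^{n-2}\}.$$
   Context: $[n]=\{1,\dots,n\}$ and $2^{[n]}$ is its power set. *)

theory Defs
  imports Complex_Main
begin

definition cross_IU :: "nat \<Rightarrow> nat set set \<Rightarrow> nat set set \<Rightarrow> bool" where
  "cross_IU n \<A> \<B> \<longleftrightarrow> (\<forall>A\<in>\<A>. \<forall>B\<in>\<B>. A \<inter> B \<noteq> {} \<and> A \<union> B \<noteq> {1..n})"

end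

theory Submission
  imports Defs
begin

(* Let U be the union of the families and I the sets lying in at least two of them. Each X in I
   is cross-IU with every Y in U (choose a family containing X other than the one containing Y);
   in particular I is itself an IU family. Its up-closure P is intersecting and its down-closure
   Q has no two members covering [n], so neither contains a set together with its complement and
   |P|, |Q| <= 2^(n-1). Kleitman's inequality 2^n |P \<inter> Q| <= |P| |Q| then forces
   4 |P \<inter> Q| <= |P| + |Q|, whence |P \<union> Q| >= 3 |P \<inter> Q| >= 3 |I|. The complements of the
   members of P \<union> Q each fail to be IU with some member of I, so they lie outside U. This gives
   4 |I| + |U - I| <= 2^n, while \<Sum> |A_i| <= d |I| + |U - I|; the bound follows by comparing
   d with 4. *)

definition up_closed :: "'a set \<Rightarrow> 'a set set \<Rightarrow> bool" where
  "up_closed S F \<longleftrightarrow> F \<subseteq> Pow S \<and> (\<forall>X\<in>F. \<forall>Y. X \<subseteq> Y \<and> Y \<subseteq> S \<longrightarrow> Y \<in> F)"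

definition down_closed :: "'a set \<Rightarrow> 'a set set \<Rightarrow> bool" where
  "down_closed S F \<longleftrightarrow> F \<subseteq> Pow S \<and> (\<forall>X\<in>F. \<forall>Y. Y \<subseteq> X \<longrightarrow> Y \<in> F)"

lemma card_split_insert:
  assumes "finite S" "a \<notin> S" "F \<subseteq> Pow (insert a S)"
  shows "card F = card {X\<in>F. a \<notin> X} + card {X\<in>Pow S. insert a X \<in> F}"
proof -
  have "finite F"
    using assms by (meson finite_Pow_iff finite_insert finite_subset)
  then have "card F = card {X\<in>F. a \<notin> X} + card {X\<in>F. a \<in> X}"
    by (subst card_Un_disjoint[symmetric]) (auto intro: arg_cong[where f = card])
  also have "{X\<in>F. a \<in> X} = insert a ` {X\<in>Pow S. insert a X \<in> F}"
  proof (intro equalityI subsetI)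
    fix X assume "X \<in> {X\<in>F. a \<in> X}"
    with assms(3) show "X \<in> insert a ` {X\<in>Pow S. insert a X \<in> F}"
      by (intro image_eqI[of _ _ "X - {a}"]) (auto simp: insert_absorb)
  qed auto
  also have "card \<dots> = card {X\<in>Pow S. insert a X \<in> F}"
    using assms(2) by (intro card_image inj_onI) (auto simp: insert_ident)
  finally show ?thesis .
qed

lemma up_closed_split_insert:
  assumes "up_closed (insert a S) P" "a \<notin> S"
  shows "up_closed S {X\<in>P. a \<notin> X}" "up_closed S {X\<in>Pow S. insert a X \<in> P}"
    and "{X\<in>P. a \<notin> X} \<subseteq> {X\<in>Pow S. insert a X \<in> P}"
proof -
  have P: "P \<subseteq> Pow (insert a S)" "\<And>X Y. X \<in> P \<Longrightarrow> X \<subseteq> Y \<Longrightarrow> Y \<subseteq> insert a S \<Longrightarrow> Y \<in> P"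
    using assms(1) unfolding up_closed_def by blast+
  show "up_closed S {X\<in>P. a \<notin> X}"
    unfolding up_closed_def using P assms(2) by (auto 4 3 intro: P(2) subset_insertI2)
  show "up_closed S {X\<in>Pow S. insert a X \<in> P}"
    unfolding up_closed_def using P(2) by (auto 4 4 intro: P(2) insert_mono)
  show "{X\<in>P. a \<notin> X} \<subseteq> {X\<in>Pow S. insert a X \<in> P}"
    using P by (auto intro!: P(2)[OF _ subset_insertI])
qed

lemma down_closed_split_insert:
  assumes "down_closed (insert a S) Q" "a \<notin> S"
  shows "down_closed S {X\<in>Q. a \<notin> X}" "down_closed S {X\<in>Pow S. insert a X \<in> Q}"
    and "{X\<in>Pow S. insert a X \<in> Q} \<subseteq> {X\<in>Q. a \<notin> X}"
proof -
  have Q: "Q \<subseteq> Pow (insert a S)" "\<And>X Y. X \<in> Q \<Longrightarrow> Y \<subseteq> X \<Longrightarrow> Y \<in> Q"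
    using assms(1) unfolding down_closed_def by blast+
  show "down_closed S {X\<in>Q. a \<notin> X}"
    unfolding down_closed_def using Q assms(2) by auto
  show "down_closed S {X\<in>Pow S. insert a X \<in> Q}"
    unfolding down_closed_def using Q(2) by (auto 4 3 intro: Q(2) insert_mono)
  show "{X\<in>Pow S. insert a X \<in> Q} \<subseteq> {X\<in>Q. a \<notin> X}"
    using Q(2) assms(2) by (auto 4 3)
qed

lemma rearrangement_inequality_two:
  fixes p0 p1 q0 q1 :: nat
  assumes "p0 \<le> p1" "q1 \<le> q0"
  shows "p0 * q0 + p1 * q1 \<le> p0 * q1 + p1 * q0"
proof -
  obtain a b where "p1 = p0 + a" "q0 = q1 + b"
    using assms le_Suc_ex by blast
  then show ?thesis by (simp add: algebra_simps)
qed

lemma kleitman_up_down: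
  assumes "finite S" "up_closed S P" "down_closed S Q"
  shows "2 ^ card S * card (P \<inter> Q) \<le> card P * card Q"
  using assms
proof (induction S arbitrary: P Q rule: finite_induct)
  case empty
  then have "P \<subseteq> {{}}" "Q \<subseteq> {{}}"
    unfolding up_closed_def down_closed_def by auto
  then show ?case
    by (auto simp: subset_singleton_iff)
next
  case (insert a S)
  define P0 where "P0 = {X\<in>P. a \<notin> X}"
  define P1 where "P1 = {X\<in>Pow S. insert a X \<in> P}"
  define Q0 where "Q0 = {X\<in>Q. a \<notin> X}"
  define Q1 where "Q1 = {X\<in>Pow S. insert a X \<in> Q}"
  have P: "up_closed S P0" "up_closed S P1" "P0 \<subseteq> P1"
    unfolding P0_def P1_def by (rule up_closed_split_insert[OF insert.prems(1) insert.hyps(2)])+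
  have Q: "down_closed S Q0" "down_closed S Q1" "Q1 \<subseteq> Q0"
    unfolding Q0_def Q1_def by (rule down_closed_split_insert[OF insert.prems(2) insert.hyps(2)])+
  have PQ: "P \<subseteq> Pow (insert a S)" "Q \<subseteq> Pow (insert a S)"
    using insert.prems unfolding up_closed_def down_closed_def by blast+
  then have "card P = card P0 + card P1" "card Q = card Q0 + card Q1"
    unfolding P0_def P1_def Q0_def Q1_def by (simp_all add: card_split_insert[OF insert.hyps(1,2)])
  moreover have "card (P \<inter> Q) = card (P0 \<inter> Q0) + card (P1 \<inter> Q1)"
  proof -
    have "{X\<in>P \<inter> Q. a \<notin> X} = P0 \<inter> Q0" "{X\<in>Pow S. insert a X \<in> P \<inter> Q} = P1 \<inter> Q1"
      unfolding P0_def P1_def Q0_def Q1_def by auto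
    then show ?thesis
      using card_split_insert[OF insert.hyps(1,2), of "P \<inter> Q"] PQ by auto
  qed
  moreover have "card P0 \<le> card P1" "card Q1 \<le> card Q0"
    using P Q insert.hyps(1) unfolding up_closed_def down_closed_def
    by (meson card_mono finite_Pow_iff finite_subset)+
  moreover have "2 ^ card S * card (P0 \<inter> Q0) \<le> card P0 * card Q0"
    "2 ^ card S * card (P1 \<inter> Q1) \<le> card P1 * card Q1"
    using insert.IH P Q by blast+
  ultimately show ?case
    using rearrangement_inequality_two[of "card P0" "card P1" "card Q1" "card Q0"] insert.hyps
    by (simp add: algebra_simps)
qed

lemma card_disjoint_families_le:
  assumes "finite S" "F \<subseteq> Pow S" "G \<subseteq> Pow S" "F \<inter> G = {}"
  shows "card F + card G \<le> 2 ^ card S"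
proof -
  have "finite F" "finite G"
    using assms(1-3) by (auto intro: finite_subset)
  then have "card F + card G = card (F \<union> G)"
    using assms(4) by (simp add: card_Un_disjoint)
  also have "\<dots> \<le> card (Pow S)"
    using assms(1-3) by (intro card_mono) auto
  finally show ?thesis
    using assms(1) by (simp add: card_Pow)
qed

lemma inj_on_Diff_Pow: "inj_on ((-) S) (Pow S)"
  by (rule inj_onI) blast

lemma card_complement_free_le:
  assumes "finite S" "F \<subseteq> Pow S" "\<And>X. X \<in> F \<Longrightarrow> S - X \<notin> F"
  shows "2 * card F \<le> 2 ^ card S"
proof -
  have "card ((-) S ` F) = card F"
    using assms(2) by (intro card_image inj_on_subset[OF inj_on_Diff_Pow])
  moreover have "card F + card ((-) S ` F) \<le> 2 ^ card S"
    using assms by (intro card_disjoint_families_le) auto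
  ultimately show ?thesis
    by simp
qed

lemma four_mul_le_add_of_product_bound:
  fixes p q r s :: nat
  assumes "s * r \<le> p * q" "2 * p \<le> s" "2 * q \<le> s" "0 < s"
  shows "4 * r \<le> p + q"
proof -
  have "s * (4 * r) \<le> 2 * p * q + p * (2 * q)"
    using assms(1) by simp
  also have "\<dots> \<le> s * q + p * s"
    using assms(2,3) by (intro add_mono mult_right_mono mult_left_mono) auto
  also have "\<dots> = s * (p + q)"
    by (simp add: algebra_simps)
  finally show ?thesis
    using assms(4) by simp
qed

definition up_closure :: "'a set \<Rightarrow> 'a set set \<Rightarrow> 'a set set" where
  "up_closure S I = {Y\<in>Pow S. \<exists>X\<in>I. X \<subseteq> Y}"

definition down_closure :: "'a set \<Rightarrow> 'a set set \<Rightarrow> 'a set set" where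
  "down_closure S I = {Y\<in>Pow S. \<exists>X\<in>I. Y \<subseteq> X}"

lemma up_closed_up_closure: "up_closed S (up_closure S I)"
  unfolding up_closed_def up_closure_def by auto

lemma down_closed_down_closure: "down_closed S (down_closure S I)"
  unfolding down_closed_def down_closure_def by auto

lemma complement_notin_up_closure:
  assumes "\<And>X Y. X \<in> I \<Longrightarrow> Y \<in> I \<Longrightarrow> X \<inter> Y \<noteq> {}" "Y \<in> up_closure S I"
  shows "S - Y \<notin> up_closure S I"
proof
  assume "S - Y \<in> up_closure S I"
  then obtain X1 X2 where "X1 \<in> I" "X2 \<in> I" "X1 \<subseteq> Y" "X2 \<subseteq> S - Y"
    using assms(2) unfolding up_closure_def by auto
  then show False
    using assms(1)[of X1 X2] by auto
qed

lemma complement_notin_down_closure: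
  assumes "I \<subseteq> Pow S" "\<And>X Y. X \<in> I \<Longrightarrow> Y \<in> I \<Longrightarrow> X \<union> Y \<noteq> S" "Y \<in> down_closure S I"
  shows "S - Y \<notin> down_closure S I"
proof
  assume "S - Y \<in> down_closure S I"
  then obtain X1 X2 where "X1 \<in> I" "X2 \<in> I" "Y \<subseteq> X1" "S - Y \<subseteq> X2"
    using assms(3) unfolding down_closure_def by auto
  moreover have "X1 \<subseteq> S" "X2 \<subseteq> S"
    using assms(1) \<open>X1 \<in> I\<close> \<open>X2 \<in> I\<close> by auto
  ultimately show False
    using assms(2)[of X1 X2] by auto
qed

definition IU_conflicts :: "'a set \<Rightarrow> 'a set set \<Rightarrow> 'a set set" where
  "IU_conflicts S I = {Y\<in>Pow S. \<exists>X\<in>I. X \<inter> Y = {} \<or> X \<union> Y = S}"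

lemma IU_conflicts_subset_Pow: "IU_conflicts S I \<subseteq> Pow S"
  unfolding IU_conflicts_def by blast

lemma complement_closures_subset_IU_conflicts:
  assumes "I \<subseteq> Pow S"
  shows "(-) S ` (up_closure S I \<union> down_closure S I) \<subseteq> IU_conflicts S I"
proof
  fix Z assume "Z \<in> (-) S ` (up_closure S I \<union> down_closure S I)"
  then obtain X Y where "Z = S - Y" "X \<in> I" "X \<subseteq> Y \<or> Y \<subseteq> X"
    unfolding up_closure_def down_closure_def by auto
  moreover have "X \<subseteq> S"
    using assms \<open>X \<in> I\<close> by auto
  from \<open>X \<subseteq> Y \<or> Y \<subseteq> X\<close> have "X \<inter> Z = {} \<or> X \<union> Z = S"
  proof
    assume "X \<subseteq> Y"
    then show ?thesis
      using \<open>Z = S - Y\<close> by (intro disjI1) blast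
  next
    assume "Y \<subseteq> X"
    then show ?thesis
      using \<open>Z = S - Y\<close> \<open>X \<subseteq> S\<close> by (intro disjI2) blast
  qed
  then show "Z \<in> IU_conflicts S I"
    unfolding IU_conflicts_def using \<open>Z = S - Y\<close> \<open>X \<in> I\<close> by blast
qed

lemma card_IU_conflicts:
  assumes "finite S" "I \<subseteq> Pow S" "\<And>X Y. X \<in> I \<Longrightarrow> Y \<in> I \<Longrightarrow> X \<inter> Y \<noteq> {} \<and> X \<union> Y \<noteq> S"
  shows "3 * card I \<le> card (IU_conflicts S I)"
proof -
  define P where "P = up_closure S I"
  define Q where "Q = down_closure S I"
  have "finite P" "finite Q"
    using assms(1) unfolding P_def Q_def up_closure_def down_closure_def by simp_all
  have "2 * card P \<le> 2 ^ card S"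
    unfolding P_def using assms
    by (intro card_complement_free_le complement_notin_up_closure) (auto simp: up_closure_def)
  moreover have "2 * card Q \<le> 2 ^ card S"
    unfolding Q_def using assms
    by (intro card_complement_free_le complement_notin_down_closure) (auto simp: down_closure_def)
  moreover have "2 ^ card S * card (P \<inter> Q) \<le> card P * card Q"
    unfolding P_def Q_def using assms(1) up_closed_up_closure down_closed_down_closure
    by (rule kleitman_up_down)
  ultimately have "4 * card (P \<inter> Q) \<le> card P + card Q"
    by (intro four_mul_le_add_of_product_bound) auto
  moreover have "card I \<le> card (P \<inter> Q)"
    using assms(2) \<open>finite P\<close> by (intro card_mono) (auto simp: P_def Q_def up_closure_def down_closure_def)
  moreover have "card (P \<union> Q) + card (P \<inter> Q) = card P + card Q"
    using \<open>finite P\<close> \<open>finite Q\<close> by (rule card_Un_Int[symmetric])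
  moreover have "card (P \<union> Q) = card ((-) S ` (P \<union> Q))"
    by (intro card_image[symmetric] inj_on_subset[OF inj_on_Diff_Pow])
      (auto simp: P_def Q_def up_closure_def down_closure_def)
  moreover have "\<dots> \<le> card (IU_conflicts S I)"
    unfolding P_def Q_def using assms(1,2)
    by (intro card_mono complement_closures_subset_IU_conflicts finite_subset[OF IU_conflicts_subset_Pow]) simp
  ultimately show ?thesis
    by linarith
qed

lemma card_cross_IU_subfamily_le:
  assumes "finite S" "U \<subseteq> Pow S" "I \<subseteq> U"
    and "\<And>X Y. X \<in> I \<Longrightarrow> Y \<in> U \<Longrightarrow> X \<inter> Y \<noteq> {} \<and> X \<union> Y \<noteq> S"
  shows "4 * card I + card (U - I) \<le> 2 ^ card S"
proof -
  define N where "N = IU_conflicts S I"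
  have "3 * card I \<le> card N"
    unfolding N_def using assms(1)
  proof (rule card_IU_conflicts)
    show "I \<subseteq> Pow S"
      using assms(2,3) by blast
    show "X \<inter> Y \<noteq> {} \<and> X \<union> Y \<noteq> S" if "X \<in> I" "Y \<in> I" for X Y
      using assms(3,4) that by blast
  qed
  moreover have "card U + card N \<le> 2 ^ card S"
  proof -
    have "U \<inter> N = {}"
      using assms(4) unfolding N_def IU_conflicts_def by auto
    then show ?thesis
      unfolding N_def using assms(1,2) by (intro card_disjoint_families_le IU_conflicts_subset_Pow)
  qed
  moreover have "card U = card I + card (U - I)"
  proof -
    have "finite U"
      using assms(2) by (rule finite_subset) (simp add: assms(1))
    then show ?thesis
      using assms(3) by (metis card_Diff_subset card_mono finite_subset le_add_diff_inverse)
  qed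
  ultimately show ?thesis
    by linarith
qed

definition shared_members :: "'i set \<Rightarrow> ('i \<Rightarrow> 'b set) \<Rightarrow> 'b set" where
  "shared_members D A = {x. \<exists>i\<in>D. \<exists>j\<in>D. i \<noteq> j \<and> x \<in> A i \<and> x \<in> A j}"

lemma shared_member_cross_IU:
  assumes "\<And>i j. i \<in> D \<Longrightarrow> j \<in> D \<Longrightarrow> i \<noteq> j \<Longrightarrow> cross_IU n (A i) (A j)"
    and "X \<in> shared_members D A" "Y \<in> (\<Union>i\<in>D. A i)"
  shows "X \<inter> Y \<noteq> {} \<and> X \<union> Y \<noteq> {1..n}"
proof -
  obtain k where k: "k \<in> D" "Y \<in> A k"
    using assms(3) by blast
  obtain i j where "i \<in> D" "j \<in> D" "i \<noteq> j" "X \<in> A i" "X \<in> A j"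
    using assms(2) unfolding shared_members_def by blast
  then obtain l where l: "l \<in> D" "l \<noteq> k" "X \<in> A l"
    by (cases "i = k") auto
  show ?thesis
    using assms(1)[OF l(1) k(1) l(2)] l(3) k(2) unfolding cross_IU_def by simp
qed

lemma sum_card_le_shared_members:
  assumes "finite D" "\<And>i. i \<in> D \<Longrightarrow> finite (A i)"
  defines "U \<equiv> \<Union>i\<in>D. A i"
  shows "(\<Sum>i\<in>D. card (A i)) \<le> card D * card (shared_members D A) + card (U - shared_members D A)"
proof -
  let ?I = "shared_members D A"
  have "finite U"
    using assms(1,2) unfolding U_def by blast
  have "?I \<subseteq> U"
    unfolding shared_members_def U_def by blast
  have "(\<Sum>i\<in>D. card (A i)) = (\<Sum>i\<in>D. card {x\<in>U. x \<in> A i})"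
    unfolding U_def by (intro sum.cong refl arg_cong[where f = card]) auto
  also have "\<dots> = (\<Sum>x\<in>U. card {i\<in>D. x \<in> A i})"
    using assms(1) \<open>finite U\<close> by (rule sum_multicount_gen) simp
  also have "\<dots> = (\<Sum>x\<in>U - ?I. card {i\<in>D. x \<in> A i}) + (\<Sum>x\<in>?I. card {i\<in>D. x \<in> A i})"
    using \<open>?I \<subseteq> U\<close> \<open>finite U\<close> by (rule sum.subset_diff)
  also have "\<dots> \<le> (\<Sum>x\<in>U - ?I. 1) + (\<Sum>x\<in>?I. card D)"
  proof (intro add_mono sum_mono)
    show "card {i\<in>D. x \<in> A i} \<le> 1" if "x \<in> U - ?I" for x
      using that assms(1) unfolding shared_members_def One_nat_def by (subst card_le_Suc0_iff_eq) auto
    show "card {i\<in>D. x \<in> A i} \<le> card D" for x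
      using assms(1) by (intro card_mono) auto
  qed
  also have "\<dots> = card D * card ?I + card (U - ?I)"
    by simp
  finally show ?thesis .
qed

lemma weighted_count_le_max:
  fixes d i u M :: real
  assumes "0 \<le> i" "0 \<le> u" "4 * i + u \<le> M"
  shows "d * i + u \<le> max M (d * M / 4)"
proof (cases "d \<le> 4")
  case True
  then have "d * i \<le> 4 * i"
    using assms(1) by (intro mult_right_mono)
  then show ?thesis
    using assms(3) by linarith
next
  case False
  then have "(d - 4) * i \<le> (d - 4) * (M / 4)"
    using assms by (intro mult_left_mono) auto
  then show ?thesis
    using assms(3) by (simp add: algebra_simps)
qed

theorem theorem1p10:
  fixes n d :: nat and \<A> :: "nat \<Rightarrow> nat set set"
  assumes "\<And>i. i \<in> {1..d} \<Longrightarrow> \<A> i \<subseteq> Pow {1..n}"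
    and "\<And>i j. i \<in> {1..d} \<Longrightarrow> j \<in> {1..d} \<Longrightarrow> i \<noteq> j \<Longrightarrow> cross_IU n (\<A> i) (\<A> j)"
  shows "real (\<Sum>i=1..d. card (\<A> i)) \<le> max (2 ^ n) (real d * 2 ^ n / 4)"
proof -
  define U where "U = (\<Union>i\<in>{1..d}. \<A> i)"
  define I where "I = shared_members {1..d} \<A>"
  have "U \<subseteq> Pow {1..n}" "I \<subseteq> U"
    using assms(1) unfolding U_def I_def shared_members_def by blast+
  then have "4 * card I + card (U - I) \<le> 2 ^ card {1..n}"
    unfolding U_def I_def
    by (intro card_cross_IU_subfamily_le shared_member_cross_IU[where D = "{1..d}"]) (auto intro: assms(2))
  then have budget: "4 * card I + card (U - I) \<le> 2 ^ n"
    by simp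
  have "finite (\<A> i)" if "i \<in> {1..d}" for i
    using assms(1)[OF that] by (rule finite_subset) simp
  then have "(\<Sum>i=1..d. card (\<A> i)) \<le> d * card I + card (U - I)"
    using sum_card_le_shared_members[of "{1..d}" \<A>] unfolding U_def I_def by simp
  then have "real (\<Sum>i=1..d. card (\<A> i)) \<le> real (d * card I + card (U - I))"
    by (rule of_nat_mono)
  also have "\<dots> \<le> max (2 ^ n) (real d * 2 ^ n / 4)"
    using weighted_count_le_max[of "card I" "card (U - I)" "2 ^ n" "real d"]
      of_nat_mono[OF budget, where 'a = real]
    by simp
  finally show ?thesis .
qed

end
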